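(* Let $d\ge3$ be an integer, $p_1,\dots,p_d\in(0,1)$, $q_j=1-p_j$, and $P=\prod_{j=1}^d p_jq_j^{-1}$. Then there exist sequences $\varepsilon_n\to0$ and $\delta_n\to0$ such that for all sufficiently large $n$, $$\sum_{k=0}^n\binom nk^dP^k\le\left(\frac{P^{1/d}+1}{\sqrt{2\pi P^{1/d}}}+\varepsilon_n\right)^{d-1}n^{-\frac{d-1}{2}}\left(1+P^{1/d}\right)^{dn},$$ $$\sum_{k=0}^n\binom nk^dP^k\ge\left(\frac{P^{1/d}+1}{\sqrt{2\pi P^{1/d}}}\exp\!\left(-\frac{(P^{1/d}+1)^2}{2P^{1/d}}\right)+\delta_n\right)^{d}n^{-\frac{d-1}{2}}\left(1+P^{1/d}\right)^{dn}.$$ *)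

theory Defs
  imports Complex_Main
begin

end

theory Submission
  imports Defs "HOL-Probability.Probability"
begin

(*
  Put r = P^(1/d) and x = r/(1+r). Then binom(n,k)^d P^k = (1+r)^(dn) b_k^d, where
  b_k = binom(n,k) x^k (1-x)^(n-k) are the binomial probabilities (Bernstein polynomials at x).

  Upper bound: sum b_k^d <= (max b_k)^(d-1), the maximum is attained at the mode, and Stirling's
  formula bounds it by (1 + o(1)) / sqrt (2 pi n x (1-x)) = (1 + o(1)) (r+1) / sqrt (2 pi r n).
  Stirling's formula with its constant sqrt (2 pi) is derived from Wallis' product.

  Lower bound (with delta = 0): by Hoeffding's inequality at least half of the binomial mass lies
  within sqrt n of the mean, i.e. on at most 3 sqrt n integers, so by the power mean inequality
  sum b_k^d >= 2^(-d) (3 sqrt n)^(1-d) >= 6^(-d) n^(-(d-1)/2); and the constant of the claimed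
  lower bound, ((r+1) / sqrt (2 pi r)) exp (-(r+1)^2 / (2r)), is at most 1/6.
*)

lemma ln_one_plus_ge:
  fixes x :: real assumes "0 \<le> x" shows "2*x/(2+x) \<le> ln (1+x)"
proof -
  let ?f = "\<lambda>x::real. ln (1+x) - 2*x/(2+x)"
  have "?f 0 \<le> ?f x"
  proof (rule DERIV_nonneg_imp_nondecreasing[OF assms])
    fix t :: real assume t: "0 \<le> t" "t \<le> x"
    have "(?f has_real_derivative (1/(1+t) - (2*(2+t) - 2*t)/(2+t)^2)) (at t)"
      using t by (auto intro!: derivative_eq_intros simp: power2_eq_square)
    moreover have "1/(1+t) - (2*(2+t) - 2*t)/(2+t)^2 = t^2/((1+t)*(2+t)^2)"
      using t by (simp add: divide_simps) (simp add: algebra_simps power2_eq_square)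
    moreover have "0 \<le> t^2/((1+t)*(2+t)^2)" using t by simp
    ultimately show "\<exists>y. (?f has_real_derivative y) (at t) \<and> 0 \<le> y" by metis
  qed
  then show ?thesis by simp
qed

lemma ln_one_plus_le:
  fixes x :: real assumes "0 \<le> x" shows "ln (1+x) \<le> x*(x+2)/(2*(x+1))"
proof -
  let ?f = "\<lambda>x::real. x*(x+2)/(2*(x+1)) - ln (1+x)"
  have "?f 0 \<le> ?f x"
  proof (rule DERIV_nonneg_imp_nondecreasing[OF assms])
    fix t :: real assume t: "0 \<le> t" "t \<le> x"
    have "(?f has_real_derivative (((t+2) + t)*(2*(t+1)) - t*(t+2)*2)/(2*(t+1))^2 - 1/(1+t)) (at t)"
      using t by (auto intro!: derivative_eq_intros simp: power2_eq_square)
    moreover have "(((t+2) + t)*(2*(t+1)) - t*(t+2)*2)/(2*(t+1))^2 - 1/(1+t) = t^2/(2*(1+t)^2)"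
      using t by (simp add: divide_simps) (simp add: algebra_simps power2_eq_square)
    moreover have "0 \<le> t^2/(2*(1+t)^2)" using t by simp
    ultimately show "\<exists>y. (?f has_real_derivative y) (at t) \<and> 0 \<le> y" by metis
  qed
  then show ?thesis by simp
qed

definition log_stirling_ratio :: "nat \<Rightarrow> real" where
  "log_stirling_ratio n = ln (fact n) + real n - (real n + 1/2) * ln (real n)"

lemma log_stirling_ratio_diff:
  assumes "n \<ge> 1"
  shows "log_stirling_ratio n - log_stirling_ratio (Suc n) = (real n + 1/2) * ln (1 + 1/real n) - 1"
proof -
  define L where "L = ln (1 + 1/real n)"
  have "1 + 1/real n = (real n + 1)/real n" using assms by (simp add: field_simps)
  then have L: "ln (real (Suc n)) = ln (real n) + L"
    using assms unfolding L_def by (simp add: ln_div)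
  have "ln (fact (Suc n) :: real) = ln (real (Suc n)) + ln (fact n)"
    by (simp add: ln_mult)
  then show ?thesis unfolding log_stirling_ratio_def L L_def[symmetric] by (simp add: algebra_simps)
qed

lemma log_stirling_ratio_Suc_le:
  assumes "n \<ge> 1" shows "log_stirling_ratio (Suc n) \<le> log_stirling_ratio n"
proof -
  have "2*(1/real n)/(2+1/real n) \<le> ln (1 + 1/real n)" by (rule ln_one_plus_ge) simp
  moreover have "2*(1/real n)/(2+1/real n) = 1/(real n + 1/2)" using assms by (simp add: field_simps)
  ultimately have "1 \<le> (real n + 1/2) * ln (1 + 1/real n)"
    using assms by (simp add: field_simps)
  then show ?thesis using log_stirling_ratio_diff[OF assms] by simp
qed

lemma decseq_log_stirling_ratio: "decseq (\<lambda>n. log_stirling_ratio (Suc n))"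
  by (rule decseq_SucI) (simp add: log_stirling_ratio_Suc_le)

lemma log_stirling_ratio_diff_le:
  assumes "n \<ge> 1"
  shows "log_stirling_ratio n - log_stirling_ratio (Suc n) \<le> 1/(4*real n) - 1/(4*(real n + 1))"
proof -
  have "ln (1 + 1/real n) \<le> (1/real n)*((1/real n)+2)/(2*((1/real n)+1))"
    by (rule ln_one_plus_le) simp
  then have "(real n + 1/2) * ln (1 + 1/real n)
      \<le> (real n + 1/2) * ((1/real n)*((1/real n)+2)/(2*((1/real n)+1)))"
    by (intro mult_left_mono) auto
  also have "\<dots> = 1 + (1/(4*real n) - 1/(4*(real n + 1)))"
    using assms by (simp add: divide_simps) (simp add: algebra_simps)
  finally show ?thesis using log_stirling_ratio_diff[OF assms] by simp
qed

lemma log_stirling_ratio_ge_three_quarters: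
  assumes "n \<ge> 1" shows "3/4 + 1/(4*real n) \<le> log_stirling_ratio n"
  using assms
proof (induction n rule: dec_induct)
  case base
  then show ?case by (simp add: log_stirling_ratio_def)
next
  case (step m)
  then show ?case using log_stirling_ratio_diff_le[of m] by (simp add: add.commute)
qed

lemma Wallis_partial_product_eq:
  "(\<Prod>k=1..n. 4*(real k)^2/(4*(real k)^2 - 1)) = 16^n * (fact n)^4 / ((fact (2*n))^2 * (2*real n+1))"
proof (induction n)
  case 0
  then show ?case by simp
next
  case (Suc n)
  define A B where "A = (fact n :: real)" and "B = (fact (2*n) :: real)"
  have pos: "A > 0" "B > 0" unfolding A_def B_def by simp_all
  have "(\<Prod>k=1..Suc n. 4*(real k)^2/(4*(real k)^2 - 1)) =
     16^n * A^4 / (B^2 * (2*real n+1)) * (4*(real n+1)^2/((2*real n+1)*(2*real n+3)))"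
    unfolding A_def B_def Suc.IH[symmetric]
    by (simp add: prod.nat_ivl_Suc' add.commute power2_eq_square algebra_simps)
  also have "\<dots> = 16^(Suc n) * ((real n+1)*A)^4 / (((2*real n+2)*(2*real n+1)*B)^2 * (2*real n+3))"
    using pos by (simp add: divide_simps power2_eq_square) (simp add: algebra_simps eval_nat_numeral)
  also have "\<dots> = 16^(Suc n) * (fact (Suc n))^4 / ((fact (2 * Suc n))^2 * (2*real (Suc n)+1))"
    unfolding A_def B_def by (simp add: algebra_simps)
  finally show ?case .
qed

lemma log_stirling_ratio_double:
  assumes "n \<ge> 1"
  shows "2 * log_stirling_ratio n - log_stirling_ratio (2*n)
    = (ln 2 + ln (\<Prod>k=1..n. 4*(real k)^2/(4*(real k)^2 - 1)) + ln ((2*real n+1)/real n))/2"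
proof -
  have pos: "(fact n::real) > 0" "(fact (2*n)::real) > 0" "real n > 0" "2*real n + 1 > 0"
    using assms by auto
  have "ln (\<Prod>k=1..n. 4*(real k)^2/(4*(real k)^2 - 1))
      = real n * ln 16 + 4 * ln (fact n) - (2 * ln (fact (2*n)) + ln (2*real n+1))"
    unfolding Wallis_partial_product_eq using pos by (simp add: ln_div ln_mult ln_realpow)
  moreover have "ln (16::real) = 4 * ln 2"
    using ln_realpow[of "2::real" 4] by simp
  moreover have "ln ((2*real n+1)/real n) = ln (2*real n+1) - ln (real n)"
    using pos by (simp add: ln_div)
  moreover have "ln (real (2*n)) = ln 2 + ln (real n)"
    using pos by (simp add: ln_mult)
  ultimately show ?thesis unfolding log_stirling_ratio_def by (simp add: algebra_simps)
qed

lemma log_stirling_ratio_tendsto: "log_stirling_ratio \<longlonglongrightarrow> ln (2*pi)/2"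
proof -
  note decseq_log_stirling_ratio
  moreover have "\<forall>n. 3/4 \<le> log_stirling_ratio (Suc n)"
  proof
    fix n
    have "0 \<le> 1/(4*real (Suc n))" by simp
    then show "3/4 \<le> log_stirling_ratio (Suc n)"
      using log_stirling_ratio_ge_three_quarters[of "Suc n"] by linarith
  qed
  ultimately obtain L where L: "(\<lambda>n. log_stirling_ratio (Suc n)) \<longlonglongrightarrow> L"
    using decseq_convergent by blast
  have "(\<lambda>n. log_stirling_ratio (Suc (2*n+1))) \<longlonglongrightarrow> L"
    using LIMSEQ_subseq_LIMSEQ[OF L, of "\<lambda>n. 2*n+1"] by (simp add: strict_mono_def o_def)
  then have "(\<lambda>n. 2 * log_stirling_ratio (Suc n) - log_stirling_ratio (2 * Suc n))
      \<longlonglongrightarrow> 2*L - L"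
    by (intro tendsto_intros L) simp
  moreover have "(\<lambda>n. 2 * log_stirling_ratio (Suc n) - log_stirling_ratio (2 * Suc n))
      \<longlonglongrightarrow> (ln 2 + ln (pi/2) + ln 2)/2"
  proof -
    have "(\<lambda>n. 2 + 1/real (Suc n)) \<longlonglongrightarrow> 2 + 0"
      using LIMSEQ_Suc[OF lim_inverse_n'] by (intro tendsto_intros) simp
    moreover have "(2*real (Suc n)+1)/real (Suc n) = 2 + 1/real (Suc n)" for n
      by (simp add: field_simps)
    ultimately have "(\<lambda>n. (2*real (Suc n)+1)/real (Suc n)) \<longlonglongrightarrow> 2" by simp
    then have "(\<lambda>n. (ln 2 + ln (\<Prod>k=1..Suc n. 4*(real k)^2/(4*(real k)^2 - 1))
        + ln ((2*real (Suc n)+1)/real (Suc n)))/2) \<longlonglongrightarrow> (ln 2 + ln (pi/2) + ln 2)/2"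
      by (intro tendsto_intros LIMSEQ_Suc[OF wallis]) auto
    then show ?thesis by (subst log_stirling_ratio_double) simp_all
  qed
  moreover have "(ln 2 + ln (pi/2) + ln (2::real))/2 = ln (2*pi)/2"
    by (simp add: ln_mult ln_div)
  ultimately have "L = ln (2*pi)/2" using LIMSEQ_unique by fastforce
  then show ?thesis using L LIMSEQ_imp_Suc by blast
qed

lemma log_stirling_ratio_ge:
  assumes "n \<ge> 1" shows "ln (2*pi)/2 \<le> log_stirling_ratio n"
proof -
  have "ln (2*pi)/2 \<le> log_stirling_ratio (Suc (n - 1))"
    using decseq_ge[OF decseq_log_stirling_ratio LIMSEQ_Suc[OF log_stirling_ratio_tendsto]] .
  then show ?thesis using assms by simp
qed

lemma fact_eq_log_stirling_ratio:
  assumes "n \<ge> 1"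
  shows "(fact n :: real) = exp (log_stirling_ratio n) * real n ^ n * sqrt (real n) / exp (real n)"
proof -
  have pos: "real n > 0" using assms by simp
  have "(real n + 1/2) * ln (real n) = ln (real n ^ n) + ln (sqrt (real n))"
    using pos by (simp add: ln_realpow ln_sqrt algebra_simps)
  then have "exp (log_stirling_ratio n) = fact n * exp (real n) / (real n ^ n * sqrt (real n))"
    using pos unfolding log_stirling_ratio_def by (simp add: exp_add exp_diff)
  then show ?thesis using pos by (simp add: field_simps)
qed

lemma fact_ge_Stirling:
  assumes "n \<ge> 1"
  shows "sqrt (2*pi) * real n ^ n * sqrt (real n) / exp (real n) \<le> (fact n :: real)"
proof -
  have "sqrt (2*pi) = exp (ln (2*pi)/2)"
    by (simp add: exp_ln_iff ln_sqrt[symmetric] pi_gt_zero)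
  also have "\<dots> \<le> exp (log_stirling_ratio n)"
    using log_stirling_ratio_ge[OF assms] by simp
  finally show ?thesis unfolding fact_eq_log_stirling_ratio[OF assms]
    by (intro divide_right_mono mult_right_mono) auto
qed

lemma mult_powers_le_of_sum_eq:
  fixes x y :: real and m k :: nat
  assumes "x > 0" "y > 0" "m > 0" "k > 0" "x + y = real m + real k"
  shows "x ^ m * y ^ k \<le> real m ^ m * real k ^ k"
proof -
  have "real m * ln (x / real m) \<le> real m * (x / real m - 1)"
    using assms by (intro mult_left_mono ln_le_minus_one) auto
  moreover have "real k * ln (y / real k) \<le> real k * (y / real k - 1)"
    using assms by (intro mult_left_mono ln_le_minus_one) auto
  moreover have "real m * (x / real m - 1) = x - real m" "real k * (y / real k - 1) = y - real k"
    using assms by (simp_all add: field_simps)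
  ultimately have "real m * ln x + real k * ln y \<le> real m * ln (real m) + real k * ln (real k)"
    using assms by (simp add: ln_div algebra_simps)
  then have "ln (x ^ m * y ^ k) \<le> ln (real m ^ m * real k ^ k)"
    using assms by (simp add: ln_mult ln_realpow)
  then show ?thesis using assms by simp
qed

lemma Bernstein_Suc_ratio:
  assumes "k < n"
  shows "Bernstein n (Suc k) x * (real (Suc k) * (1-x)) = Bernstein n k x * (real (n-k) * x)"
proof -
  have c: "real (Suc k) * real (n choose Suc k) = real (n - k) * real (n choose k)"
    using binomial_absorption[of k n] binomial_absorb_comp[of n k] by (metis of_nat_mult)
  have e: "n - k = Suc (n - Suc k)" using assms by simp
  have "Bernstein n (Suc k) x * (real (Suc k) * (1-x))
      = (real (Suc k) * real (n choose Suc k)) * x^Suc k * (1-x)^(n - k)"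
    unfolding Bernstein_def e by (simp add: algebra_simps)
  also have "\<dots> = Bernstein n k x * (real (n-k) * x)"
    unfolding c Bernstein_def by (simp add: algebra_simps)
  finally show ?thesis .
qed

lemma Bernstein_le_mode:
  assumes x: "0 < x" "x < 1" and k: "k \<le> n"
  shows "Bernstein n k x \<le> Bernstein n (nat \<lfloor>(real n + 1) * x\<rfloor>) x"
proof -
  define m where "m = nat \<lfloor>(real n + 1) * x\<rfloor>"
  have m: "real m \<le> (real n + 1) * x" "(real n + 1) * x < real m + 1"
    unfolding m_def using x by (simp_all add: of_nat_nat)
  have "(real n + 1) * x < real n + 1" using x by simp
  then have mn: "m \<le> n" using m by linarith
  have nonneg: "0 \<le> Bernstein n j x" for j
    using x by (simp add: Bernstein_nonneg)
  have up: "Bernstein n j x \<le> Bernstein n (Suc j) x" if "j < m" for j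
  proof -
    have "real (Suc j) * (1-x) \<le> real (n-j) * x"
      using that m mn by (simp add: of_nat_diff algebra_simps)
    then have "Bernstein n j x * (real (Suc j) * (1-x)) \<le> Bernstein n (Suc j) x * (real (Suc j) * (1-x))"
      using Bernstein_Suc_ratio[of j n x] that mn nonneg[of j] by (simp add: mult_left_mono)
    then show ?thesis using x by (simp add: mult_le_cancel_right)
  qed
  have down: "Bernstein n (Suc j) x \<le> Bernstein n j x" if "m \<le> j" "j < n" for j
  proof -
    have "real (n-j) * x \<le> real (Suc j) * (1-x)"
      using that m by (simp add: of_nat_diff algebra_simps)
    then have "Bernstein n (Suc j) x * (real (Suc j) * (1-x)) \<le> Bernstein n j x * (real (Suc j) * (1-x))"
      using Bernstein_Suc_ratio[OF that(2), of x] nonneg[of j] by (simp add: mult_left_mono)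
    then show ?thesis using x by (simp add: mult_le_cancel_right)
  qed
  show ?thesis
  proof (cases "k \<le> m")
    case True
    then show ?thesis unfolding m_def[symmetric]
      by (induction k rule: inc_induct) (auto intro: order.trans up)
  next
    case False
    then have "m \<le> k" by simp
    then show ?thesis using k unfolding m_def[symmetric]
    proof (induction k rule: dec_induct)
      case (step j)
      then show ?case using down[of j] by simp
    qed simp
  qed
qed

lemma mult_diff_ge_near_mean:
  fixes x :: real
  assumes x: "0 < x" "x < 1" and mn: "m \<le> n" and n: "1 \<le> n"
    and near: "\<bar>real m - real n * x\<bar> \<le> 1"
  shows "real n ^ 2 * (x*(1-x)) - 2 * real n \<le> real m * real (n - m)"
proof -
  define e where "e = real m - real n * x"
  have "real m * real (n - m) = real n ^ 2 * (x*(1-x)) + e * real n * (1 - 2*x) - e^2"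
    using mn unfolding e_def by (simp add: of_nat_diff algebra_simps power2_eq_square)
  moreover have "\<bar>e * real n * (1 - 2*x)\<bar> \<le> 1 * real n * 1"
    unfolding abs_mult using near x unfolding e_def by (intro mult_mono) auto
  moreover have "e^2 \<le> 1" using near unfolding e_def by (simp add: abs_square_le_1)
  moreover have "1 \<le> real n" using n by simp
  ultimately show ?thesis unfolding abs_le_iff by linarith
qed

lemma Bernstein_le_Stirling:
  assumes x: "0 < x" "x < 1" and m: "1 \<le> m" "m < n"
  shows "Bernstein n m x \<le> exp (log_stirling_ratio n) / (2*pi)
    * (sqrt (real n) / (sqrt (real m) * sqrt (real (n - m))))"
proof -
  define k where "k = n - m"
  have k: "1 \<le> k" and n: "n = m + k" and n1: "1 \<le> n" using m unfolding k_def by auto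
  define s where "s = sqrt (2*pi)"
  have s: "s > 0" "s * s = 2*pi" unfolding s_def by (simp_all add: pi_gt_zero)
  define Fm Fk where "Fm = s * real m ^ m * sqrt (real m) / exp (real m)"
    and "Fk = s * real k ^ k * sqrt (real k) / exp (real k)"
  have "0 < Fm" "Fm \<le> fact m" "0 < Fk" "Fk \<le> fact k"
    using fact_ge_Stirling[OF m(1)] fact_ge_Stirling[OF k] s m k
    unfolding Fm_def Fk_def s_def[symmetric] by auto
  then have F: "0 < Fm * Fk" "Fm * Fk \<le> fact m * fact k"
    by (auto intro: mult_mono)
  have "real n * x + real n * (1-x) = real m + real k" using n by (simp add: algebra_simps)
  then have "(real n * x)^m * (real n * (1-x))^k \<le> real m ^ m * real k ^ k"
    using x m k by (intro mult_powers_le_of_sum_eq) auto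
  then have AM_GM: "(real n * x)^m * (real n * (1-x))^k / (real m ^ m * real k ^ k) \<le> 1"
    using m k by simp
  have "Bernstein n m x = fact n * (x^m * (1-x)^k) / (fact m * fact k)"
    unfolding Bernstein_def k_def using m by (simp add: binomial_fact)
  also have "\<dots> \<le> fact n * (x^m * (1-x)^k) / (Fm * Fk)"
    using F x by (intro divide_left_mono) auto
  also have "\<dots> = exp (log_stirling_ratio n) / (s * s)
      * (sqrt (real n) / (sqrt (real m) * sqrt (real k)))
      * ((real n * x)^m * (real n * (1-x))^k / (real m ^ m * real k ^ k))"
  proof -
    have "real n ^ n = real n ^ m * real n ^ k" "exp (real n) = exp (real m) * exp (real k)"
      using n by (simp_all add: power_add exp_add)
    then show ?thesis
      unfolding fact_eq_log_stirling_ratio[OF n1] Fm_def Fk_def using m k s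
      by (simp add: power_mult_distrib field_simps)
        (simp add: power_mult_distrib[symmetric] algebra_simps)
  qed
  also have "\<dots> \<le> exp (log_stirling_ratio n) / (s * s)
      * (sqrt (real n) / (sqrt (real m) * sqrt (real k)))"
    using AM_GM s by (intro mult_left_le) auto
  finally show ?thesis unfolding s k_def .
qed

lemma Bernstein_near_mean_le:
  assumes x: "0 < x" "x < 1" and m: "1 \<le> m" "m < n"
    and near: "\<bar>real m - real n * x\<bar> \<le> 1" and n_large: "2/real n < x*(1-x)"
  shows "Bernstein n m x
    \<le> exp (log_stirling_ratio n) / (2*pi) / sqrt (x*(1-x) - 2/real n) / sqrt (real n)"
proof -
  define v where "v = x*(1-x) - 2/real n"
  have n: "1 \<le> n" and v: "0 < v" using m n_large unfolding v_def by auto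
  have "(real n)^2 * v \<le> real m * real (n - m)"
    using mult_diff_ge_near_mean[OF x _ n near] m n unfolding v_def
    by (simp add: algebra_simps power2_eq_square)
  then have "sqrt ((real n)^2 * v) \<le> sqrt (real m * real (n - m))"
    by (rule real_sqrt_le_mono)
  then have "real n * sqrt v \<le> sqrt (real m) * sqrt (real (n - m))"
    by (simp add: real_sqrt_mult)
  then have "sqrt (real n) / (sqrt (real m) * sqrt (real (n - m))) \<le> sqrt (real n) / (real n * sqrt v)"
    using v n m by (intro divide_left_mono mult_pos_pos) auto
  also have "\<dots> = 1 / sqrt v / sqrt (real n)"
  proof -
    have "sqrt a / (a * b) = 1 / b / sqrt a" if "0 < a" for a b :: real
      using nonzero_divide_mult_cancel_left[of "sqrt a" "sqrt a * b"] that
      by (simp add: mult.assoc[symmetric])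
    then show ?thesis using n by simp
  qed
  finally have ratio:
      "sqrt (real n) / (sqrt (real m) * sqrt (real (n - m))) \<le> 1 / sqrt v / sqrt (real n)" .
  have "Bernstein n m x \<le> exp (log_stirling_ratio n) / (2*pi)
      * (sqrt (real n) / (sqrt (real m) * sqrt (real (n - m))))"
    by (rule Bernstein_le_Stirling[OF x m])
  also have "\<dots> \<le> exp (log_stirling_ratio n) / (2*pi) * (1 / sqrt v / sqrt (real n))"
    using ratio by (rule mult_left_mono) (simp add: pi_gt_zero less_imp_le)
  finally show ?thesis unfolding v_def by simp
qed

lemma Bernstein_le_asymptotically:
  assumes x: "0 < x" "x < 1"
  obtains u where "u \<longlonglongrightarrow> 1 / sqrt (2*pi*(x*(1-x)))"
    and "\<forall>\<^sub>F n in sequentially. \<forall>k\<le>n. Bernstein n k x \<le> u n / sqrt (real n)"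
proof
  define u where "u n = exp (log_stirling_ratio n) / (2*pi) / sqrt (x*(1-x) - 2/real n)" for n
  have "u \<longlonglongrightarrow> exp (ln (2*pi)/2) / (2*pi) / sqrt (x*(1-x) - 0)"
    unfolding u_def using x
    by (intro tendsto_intros log_stirling_ratio_tendsto tendsto_divide_0[OF tendsto_const]
        filterlim_real_sequentially) auto
  moreover have "exp (ln (2*pi)/2) / (2*pi) / sqrt (x*(1-x) - 0) = 1 / sqrt (2*pi*(x*(1-x)))"
  proof -
    have "exp (ln (2*pi)/2) = sqrt (2*pi)"
      by (simp add: exp_ln_iff ln_sqrt[symmetric] pi_gt_zero)
    moreover have "sqrt (2*pi) / (2*pi) = 1 / sqrt (2*pi)"
      using nonzero_divide_mult_cancel_left[of "sqrt (2*pi)" "sqrt (2*pi)"] pi_gt_zero by simp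
    ultimately have "exp (ln (2*pi)/2) / (2*pi) / sqrt (x*(1-x) - 0) = 1 / sqrt (2*pi) / sqrt (x*(1-x))"
      by simp
    then show ?thesis by (simp add: real_sqrt_mult)
  qed
  ultimately show "u \<longlonglongrightarrow> 1 / sqrt (2*pi*(x*(1-x)))" by simp
  have "\<forall>\<^sub>F n in sequentially. 1/x < real n \<and> x/(1-x) < real n \<and> 2/(x*(1-x)) < real n"
    using filterlim_real_sequentially by (simp add: filterlim_at_top_dense eventually_conj_iff)
  then show "\<forall>\<^sub>F n in sequentially. \<forall>k\<le>n. Bernstein n k x \<le> u n / sqrt (real n)"
  proof eventually_elim
    case (elim n)
    define m where "m = nat \<lfloor>(real n + 1) * x\<rfloor>"
    have m: "real m \<le> (real n + 1) * x" "(real n + 1) * x < real m + 1"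
      unfolding m_def using x by (simp_all add: of_nat_nat)
    have "1 < real n * x" "x < real n * (1 - x)" "2/real n < x*(1-x)"
      using elim x by (simp_all add: field_simps)
    then have "1 \<le> m" "m < n" "\<bar>real m - real n * x\<bar> \<le> 1"
      using m x by (simp_all add: algebra_simps abs_le_iff)
    then have "Bernstein n m x \<le> u n / sqrt (real n)"
      unfolding u_def using Bernstein_near_mean_le[OF x] \<open>2/real n < x*(1-x)\<close> by blast
    then show ?case using Bernstein_le_mode[OF x] unfolding m_def by (meson order.trans)
  qed
qed

lemma sum_Bernstein_power_le:
  assumes x: "0 \<le> x" "x \<le> 1" and d: "d \<ge> 1" and M: "\<forall>k\<le>n. Bernstein n k x \<le> M"
  shows "(\<Sum>k\<le>n. Bernstein n k x ^ d) \<le> M ^ (d - 1)"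
proof -
  have "(\<Sum>k\<le>n. Bernstein n k x ^ d) \<le> (\<Sum>k\<le>n. M ^ (d - 1) * Bernstein n k x)"
  proof (rule sum_mono)
    fix k assume "k \<in> {..n}"
    then have "Bernstein n k x ^ (d - 1) * Bernstein n k x \<le> M ^ (d - 1) * Bernstein n k x"
      using M x by (intro mult_right_mono power_mono) (auto simp: Bernstein_nonneg)
    then show "Bernstein n k x ^ d \<le> M ^ (d - 1) * Bernstein n k x"
      using d by (cases d) (simp_all add: mult.commute)
  qed
  also have "\<dots> = M ^ (d - 1)" by (simp add: sum_distrib_left[symmetric])
  finally show ?thesis .
qed

lemma Bernstein_tail_sum_le:
  assumes x: "0 < x" "x < 1" and n: "n > 0"
  shows "(\<Sum>k\<in>{k. k \<le> n \<and> sqrt (real n) \<le> \<bar>real k - real n * x\<bar>}. Bernstein n k x)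
    \<le> 2 * exp (-2)"
proof -
  interpret binomial_distribution n x using x by unfold_locales auto
  let ?T = "{k. k \<le> n \<and> sqrt (real n) \<le> \<bar>real k - real n * x\<bar>}"
  have "measure_pmf.prob (binomial_pmf n x) {k. sqrt (real n) \<le> \<bar>real k - real n * x\<bar>}
      \<le> 2 * exp (- 2 * (sqrt (real n))\<^sup>2 / real n)"
    by (rule prob_abs_ge[OF n]) simp
  also have "- 2 * (sqrt (real n))\<^sup>2 / real n = -2" using n by simp
  also have "measure_pmf.prob (binomial_pmf n x) {k. sqrt (real n) \<le> \<bar>real k - real n * x\<bar>}
      = measure_pmf.prob (binomial_pmf n x) ?T"
    using x by (subst measure_Int_set_pmf[symmetric]) (auto intro!: arg_cong2[where f = measure])
  also have "\<dots> = (\<Sum>k\<in>?T. Bernstein n k x)"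
    using x by (subst measure_measure_pmf_finite) (auto simp: Bernstein_def intro!: sum.cong)
  finally show ?thesis .
qed

lemma card_nat_within_real_interval:
  fixes S :: "nat set" and a L :: real
  assumes "\<And>k. k \<in> S \<Longrightarrow> a \<le> real k \<and> real k \<le> a + L" and "L \<ge> 0"
  shows "real (card S) \<le> L + 1"
proof -
  define l t where "l = nat \<lceil>a\<rceil>" and "t = nat \<lfloor>L\<rfloor>"
  have "S \<subseteq> {l..l+t}"
  proof
    fix k assume k: "k \<in> S"
    then have kl: "l \<le> k" using assms(1) unfolding l_def by (simp add: nat_le_iff ceiling_le_iff)
    have "a \<le> real l" unfolding l_def by (rule real_nat_ceiling_ge)
    then have "real (k - l) \<le> L" using assms(1)[OF k] kl by (simp add: of_nat_diff)
    then have "k - l \<le> t" unfolding t_def by (simp add: le_nat_floor)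
    then show "k \<in> {l..l+t}" using kl by simp
  qed
  then have "card S \<le> t + 1" using card_mono[of "{l..l+t}" S] by simp
  moreover have "real t \<le> L" unfolding t_def using assms(2) by (simp add: of_nat_nat)
  ultimately show ?thesis by linarith
qed

lemma power_sum_le_card_power_mult_sum_power:
  fixes f :: "'a \<Rightarrow> real"
  assumes S: "finite S" "S \<noteq> {}" and f: "\<And>i. i \<in> S \<Longrightarrow> 0 \<le> f i"
  shows "(\<Sum>i\<in>S. f i) ^ d \<le> real (card S) ^ (d - 1) * (\<Sum>i\<in>S. f i ^ d)"
proof (cases "d = 0")
  case True
  then show ?thesis using S by (simp add: Suc_le_eq card_gt_0_iff)
next
  case False
  define c where "c = real (card S)"
  have c: "c > 0" unfolding c_def using S by (simp add: card_gt_0_iff)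
  have convex: "convex_on {0..} (\<lambda>x::real. x ^ d)"
  proof (cases "even d")
    case True
    then show ?thesis using convex_power_even convex_on_subset by blast
  qed (use convex_power_odd in blast)
  have "(\<Sum>i\<in>S. (1/c) *\<^sub>R f i) ^ d \<le> (\<Sum>i\<in>S. (1/c) * f i ^ d)"
    using convex_on_sum[OF S convex, of "\<lambda>_. 1/c" f] f c unfolding c_def by auto
  then have "(\<Sum>i\<in>S. f i) ^ d \<le> c ^ d / c * (\<Sum>i\<in>S. f i ^ d)"
    using c by (simp add: sum_divide_distrib[symmetric] power_divide field_simps)
  also have "c ^ d / c = c ^ (d - 1)"
    using c False by (simp add: power_diff)
  finally show ?thesis unfolding c_def .
qed

lemma Bernstein_sum_near_mean_ge_half:
  assumes x: "0 < x" "x < 1" and n: "n \<ge> 1"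
  shows "1/2 \<le> (\<Sum>k\<in>{k. k \<le> n \<and> \<bar>real k - real n * x\<bar> < sqrt (real n)}. Bernstein n k x)"
proof -
  define W where "W = {k. k \<le> n \<and> \<bar>real k - real n * x\<bar> < sqrt (real n)}"
  define T where "T = {k. k \<le> n \<and> sqrt (real n) \<le> \<bar>real k - real n * x\<bar>}"
  have "{..n} = W \<union> T" "W \<inter> T = {}" "finite W" "finite T" unfolding W_def T_def by auto
  then have "1 = (\<Sum>k\<in>W. Bernstein n k x) + (\<Sum>k\<in>T. Bernstein n k x)"
    by (metis sum_Bernstein sum.union_disjoint)
  moreover have "(\<Sum>k\<in>T. Bernstein n k x) \<le> 2 * exp (-2)"
    unfolding T_def using Bernstein_tail_sum_le[OF x] n by simp
  moreover have "2 * exp (-2::real) \<le> 1/2"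
  proof -
    have "4 \<le> (1 + 1) * (1 + (1::real))" by simp
    also have "\<dots> \<le> exp 1 * exp 1"
      using exp_ge_add_one_self[of 1] by (intro mult_mono) auto
    finally show ?thesis by (simp add: exp_minus field_simps mult_exp_exp)
  qed
  ultimately show ?thesis unfolding W_def by linarith
qed

lemma sum_Bernstein_power_ge:
  assumes x: "0 < x" "x < 1" and n: "n \<ge> 1"
  shows "(1/6)^d / sqrt (real n) ^ (d - 1) \<le> (\<Sum>k\<le>n. Bernstein n k x ^ d)"
proof -
  define W where "W = {k. k \<le> n \<and> \<bar>real k - real n * x\<bar> < sqrt (real n)}"
  have W_fin: "finite W" unfolding W_def by auto
  have nonneg: "0 \<le> Bernstein n k x" for k using x by (simp add: Bernstein_nonneg)
  have mass: "1/2 \<le> (\<Sum>k\<in>W. Bernstein n k x)"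
    unfolding W_def by (rule Bernstein_sum_near_mean_ge_half[OF x n])
  then have W_ne: "W \<noteq> {}" by auto
  have sqrt_n: "1 \<le> sqrt (real n)" using n by simp
  have "real (card W) \<le> 2 * sqrt (real n) + 1"
    by (rule card_nat_within_real_interval[where a = "real n * x - sqrt (real n)"])
      (auto simp: W_def)
  then have card_W: "real (card W) \<le> 3 * sqrt (real n)" using sqrt_n by linarith
  have "(1/2)^d \<le> (\<Sum>k\<in>W. Bernstein n k x) ^ d"
    using mass by (intro power_mono) auto
  also have "\<dots> \<le> real (card W) ^ (d - 1) * (\<Sum>k\<in>W. Bernstein n k x ^ d)"
    by (rule power_sum_le_card_power_mult_sum_power[OF W_fin W_ne nonneg])
  also have "\<dots> \<le> (3 * sqrt (real n)) ^ (d - 1) * (\<Sum>k\<le>n. Bernstein n k x ^ d)"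
    using card_W nonneg
    by (intro mult_mono power_mono sum_mono2 sum_nonneg) (auto simp: W_def)
  finally have half:
      "(1/2)^d \<le> 3 ^ (d - 1) * (sqrt (real n) ^ (d - 1) * (\<Sum>k\<le>n. Bernstein n k x ^ d))"
    by (simp add: power_mult_distrib mult.assoc)
  have "(1/6::real)^d * 3 ^ (d - 1) \<le> (1/6)^d * 3^d"
    by (intro mult_left_mono power_increasing) auto
  also have "\<dots> = (1/2)^d" by (simp add: power_mult_distrib[symmetric])
  finally have "(1/6)^d * 3 ^ (d - 1)
      \<le> 3 ^ (d - 1) * (sqrt (real n) ^ (d - 1) * (\<Sum>k\<le>n. Bernstein n k x ^ d))"
    using half by linarith
  then have "(1/6)^d \<le> sqrt (real n) ^ (d - 1) * (\<Sum>k\<le>n. Bernstein n k x ^ d)"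
    by (simp add: mult.commute)
  then show ?thesis using sqrt_n by (simp add: divide_le_eq mult.commute)
qed

lemma six_mult_le_exp:
  fixes x :: real assumes "4 \<le> x" shows "6 * x \<le> exp x"
proof -
  define y where "y = x - 4"
  have y: "0 \<le> y" "x = y + 4" using assms unfolding y_def by simp_all
  have "5 + 3/2*y \<le> 1 + x/2 + (x/2)^2/2"
    using zero_le_power2[of y] unfolding y(2) by (simp add: power2_eq_square field_simps)
  also have "\<dots> \<le> exp (x/2)" using assms by (intro exp_lower_Taylor_quadratic) simp
  finally have exp_half: "5 + 3/2*y \<le> exp (x/2)" .
  have "6 * x \<le> (5 + 3/2*y)^2"
    using zero_le_power2[of y] y unfolding y(2) by (simp add: power2_eq_square field_simps)
  also have "\<dots> \<le> (exp (x/2))^2" using exp_half y by (intro power_mono) auto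
  also have "\<dots> = exp x" by (simp flip: exp_double)
  finally show ?thesis .
qed

lemma Gaussian_factor_le_one_sixth:
  fixes r :: real assumes r: "r > 0"
  shows "(r + 1) / sqrt (2 * pi * r) * exp (- ((r + 1)^2 / (2 * r))) \<le> 1/6"
proof -
  define x where "x = (r+1)^2 / r"
  have "4 * r \<le> (r+1)^2" using zero_le_power2[of "r - 1"] by (simp add: power2_eq_square algebra_simps)
  then have x: "4 \<le> x" unfolding x_def using r by (simp add: le_divide_eq)
  have "2 * (- ((r + 1)^2 / (2 * r))) = - x" unfolding x_def using r by simp
  then have "exp (- ((r + 1)^2 / (2 * r))) ^ 2 = exp (- x)" by (metis exp_double)
  moreover have "((r + 1) / sqrt (2 * pi * r))^2 = x / (2*pi)"
    unfolding x_def using r by (simp add: power_divide)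
  ultimately have "((r + 1) / sqrt (2 * pi * r) * exp (- ((r + 1)^2 / (2 * r))))^2 = x / (2*pi) / exp x"
    by (simp add: power_mult_distrib exp_minus field_simps)
  also have "\<dots> \<le> x / 6 / (6 * x)"
    using x six_mult_le_exp[OF x] pi_gt3 by (intro divide_mono) auto
  also have "\<dots> = (1/6)^2" using x by (simp add: power2_eq_square)
  finally show ?thesis by (rule power2_le_imp_le) simp
qed

lemma sum_choose_power_eq_Bernstein:
  fixes r :: real assumes r: "r > 0"
  shows "(\<Sum>k=0..n. real (n choose k) ^ d * (r^d) ^ k)
    = (1 + r) ^ (d * n) * (\<Sum>k\<le>n. Bernstein n k (r/(1+r)) ^ d)"
proof -
  have "real (n choose k) ^ d * (r^d) ^ k = (1 + r) ^ (d * n) * Bernstein n k (r/(1+r)) ^ d"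
    if "k \<le> n" for k
  proof -
    have "1 - r/(1+r) = 1/(1+r)" using r by (simp add: field_simps)
    moreover have "(1+r)^n = (1+r)^k * (1+r)^(n-k)" using that by (simp flip: power_add)
    ultimately have "(1+r)^n * Bernstein n k (r/(1+r)) = real (n choose k) * r^k"
      using r unfolding Bernstein_def by (simp add: power_divide field_simps)
    moreover have "(1 + r) ^ (d * n) * Bernstein n k (r/(1+r)) ^ d = ((1+r)^n * Bernstein n k (r/(1+r))) ^ d"
      by (simp add: power_mult_distrib power_mult[symmetric] mult.commute)
    ultimately show ?thesis by (simp add: power_mult_distrib power_mult[symmetric] mult.commute)
  qed
  then show ?thesis by (simp add: atLeast0AtMost sum_distrib_left)
qed

lemma powr_minus_half_eq_inverse_sqrt_power:
  assumes "n \<ge> 1" "d \<ge> 1"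
  shows "real n powr (- (real d - 1) / 2) = 1 / sqrt (real n) ^ (d - 1)"
proof -
  have "sqrt (real n) ^ (d - 1) = real n powr (real (d - 1) / 2)"
    using assms by (simp add: powr_half_sqrt[symmetric] powr_power field_simps)
  moreover have "- (real d - 1) / 2 = - (real (d - 1) / 2)" using assms by (simp add: of_nat_diff field_simps)
  ultimately show ?thesis by (simp only: powr_minus_divide)
qed

lemma sum_choose_power_le:
  fixes r M :: real
  assumes r: "r > 0" and d: "d \<ge> 1" and n: "n \<ge> 1"
    and M: "\<forall>k\<le>n. Bernstein n k (r/(1+r)) \<le> M / sqrt (real n)"
  shows "(\<Sum>k=0..n. real (n choose k) ^ d * (r^d) ^ k)
    \<le> M ^ (d - 1) * real n powr (- (real d - 1) / 2) * (1 + r) ^ (d * n)"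
proof -
  have "(\<Sum>k\<le>n. Bernstein n k (r/(1+r)) ^ d) \<le> (M / sqrt (real n)) ^ (d - 1)"
    using r d M by (intro sum_Bernstein_power_le) auto
  also have "\<dots> = M ^ (d - 1) * (1 / sqrt (real n) ^ (d - 1))" by (simp add: power_divide)
  finally have "(1 + r) ^ (d * n) * (\<Sum>k\<le>n. Bernstein n k (r/(1+r)) ^ d)
      \<le> (1 + r) ^ (d * n) * (M ^ (d - 1) * (1 / sqrt (real n) ^ (d - 1)))"
    by (rule mult_left_mono) (use r in auto)
  then show ?thesis
    unfolding sum_choose_power_eq_Bernstein[OF r] powr_minus_half_eq_inverse_sqrt_power[OF n d]
    by (simp only: ac_simps)
qed

lemma sum_choose_power_ge:
  fixes r K :: real
  assumes r: "r > 0" and d: "d \<ge> 1" and n: "n \<ge> 1" and K: "0 \<le> K" "K \<le> 1/6"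
  shows "K ^ d * real n powr (- (real d - 1) / 2) * (1 + r) ^ (d * n)
    \<le> (\<Sum>k=0..n. real (n choose k) ^ d * (r^d) ^ k)"
proof -
  have "K ^ d * (1 / sqrt (real n) ^ (d - 1)) \<le> (1/6) ^ d * (1 / sqrt (real n) ^ (d - 1))"
    using K by (intro mult_right_mono power_mono) auto
  also have "\<dots> \<le> (\<Sum>k\<le>n. Bernstein n k (r/(1+r)) ^ d)"
    using sum_Bernstein_power_ge[of "r/(1+r)" n d] r n by simp
  finally have "(1 + r) ^ (d * n) * (K ^ d * (1 / sqrt (real n) ^ (d - 1)))
      \<le> (1 + r) ^ (d * n) * (\<Sum>k\<le>n. Bernstein n k (r/(1+r)) ^ d)"
    by (rule mult_left_mono) (use r in auto)
  then show ?thesis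
    unfolding sum_choose_power_eq_Bernstein[OF r] powr_minus_half_eq_inverse_sqrt_power[OF n d]
    by (simp only: ac_simps)
qed

lemma eventually_sum_choose_power_bounds:
  fixes r K :: real
  assumes r: "r > 0" and d: "d \<ge> 1" and K: "0 \<le> K" "K \<le> 1/6"
  obtains u where "u \<longlonglongrightarrow> (r + 1) / sqrt (2 * pi * r)"
    and "\<forall>\<^sub>F n in sequentially.
      (\<Sum>k=0..n. real (n choose k) ^ d * (r^d) ^ k)
        \<le> u n ^ (d - 1) * real n powr (- (real d - 1) / 2) * (1 + r) ^ (d * n)
      \<and> K ^ d * real n powr (- (real d - 1) / 2) * (1 + r) ^ (d * n)
        \<le> (\<Sum>k=0..n. real (n choose k) ^ d * (r^d) ^ k)"
proof -
  define x where "x = r / (1 + r)"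
  have x: "0 < x" "x < 1" unfolding x_def using r by auto
  obtain u where u: "u \<longlonglongrightarrow> 1 / sqrt (2*pi*(x*(1-x)))"
    and bound: "\<forall>\<^sub>F n in sequentially. \<forall>k\<le>n. Bernstein n k x \<le> u n / sqrt (real n)"
    by (rule Bernstein_le_asymptotically[OF x])
  have "x * (1 - x) = r / (1+r)^2" unfolding x_def using r by (simp add: field_simps power2_eq_square)
  then have "1 / sqrt (2*pi*(x*(1-x))) = (r + 1) / sqrt (2 * pi * r)"
    using r by (simp add: real_sqrt_divide real_sqrt_mult)
  with u have "u \<longlonglongrightarrow> (r + 1) / sqrt (2 * pi * r)" by simp
  moreover have "\<forall>\<^sub>F n in sequentially.
      (\<Sum>k=0..n. real (n choose k) ^ d * (r^d) ^ k)
        \<le> u n ^ (d - 1) * real n powr (- (real d - 1) / 2) * (1 + r) ^ (d * n)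
      \<and> K ^ d * real n powr (- (real d - 1) / 2) * (1 + r) ^ (d * n)
        \<le> (\<Sum>k=0..n. real (n choose k) ^ d * (r^d) ^ k)"
    using bound eventually_ge_at_top[of 1] unfolding x_def
    by eventually_elim (use sum_choose_power_le[OF r d] sum_choose_power_ge[OF r d _ K] in blast)
  ultimately show ?thesis using that by blast
qed

theorem proposition7:
  fixes d :: nat and p :: "nat \<Rightarrow> real" and P :: real
  assumes "d \<ge> 3"
    and "\<forall>j\<in>{1..d}. 0 < p j \<and> p j < 1"
    and "P = (\<Prod>j=1..d. p j / (1 - p j))"
  shows "\<exists>\<epsilon> \<delta> :: nat \<Rightarrow> real. \<epsilon> \<longlonglongrightarrow> 0 \<and> \<delta> \<longlonglongrightarrow> 0 \<and>
    (\<forall>\<^sub>F n in sequentially.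
      (\<Sum>k=0..n. real (n choose k) ^ d * P ^ k)
        \<le> ((root d P + 1) / sqrt (2 * pi * root d P) + \<epsilon> n) ^ (d - 1)
           * real n powr (- (real d - 1) / 2) * (1 + root d P) ^ (d * n)
    \<and> (\<Sum>k=0..n. real (n choose k) ^ d * P ^ k)
        \<ge> ((root d P + 1) / sqrt (2 * pi * root d P)
              * exp (- ((root d P + 1)^2 / (2 * root d P))) + \<delta> n) ^ d
           * real n powr (- (real d - 1) / 2) * (1 + root d P) ^ (d * n))"
proof -
  have d: "d \<ge> 1" using assms(1) by simp
  have "P > 0" unfolding assms(3) using assms(2) by (intro prod_pos) auto
  define r where "r = root d P"
  have r: "r > 0" "r ^ d = P" unfolding r_def using \<open>P > 0\<close> d by (simp_all add: real_root_pow_pos)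
  define c where "c = (r + 1) / sqrt (2 * pi * r)"
  define K where "K = c * exp (- ((r + 1)^2 / (2 * r)))"
  have K: "0 \<le> K" "K \<le> 1/6"
    unfolding K_def c_def using Gaussian_factor_le_one_sixth[OF r(1)] r by auto
  show ?thesis
  proof (rule eventually_sum_choose_power_bounds[OF r(1) d K], goal_cases)
    case (1 u)
    have "(\<lambda>n. u n - c) \<longlonglongrightarrow> 0"
      using tendsto_diff[OF 1(1) tendsto_const[of c]] unfolding c_def by simp
    with 1(2) show ?thesis unfolding r_def[symmetric] c_def[symmetric] K_def[symmetric] r(2)
      by (intro exI[of _ "\<lambda>n. u n - c"] exI[of _ "\<lambda>n. 0"]) simp
  qed
qed

end
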